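(* Let $n_{0},k_{0},\Delta,\delta$ be nonnegative integers and define $$C_i=\binom{n_{0}+i\Delta}{k_0+i\delta},\qquad i=0,1,2,\ldots.$$ If $\Delta>\delta>0$ and $-1\leq k_0-(n_0+1)\delta/\Delta\leq0$, then the sequence $\{C_i\}_{i\geq0}$ is infinitely log-monotonic.
   Context: For a sequence $\{z_n\}$ of positive numbers, define the operator $R\{z_n\}=\{z_{n+1}/z_n\}$. A sequence of positive numbers $\{x_n\}$ is log-convex if $x_{n-1}x_{n+1}\ge x_n^2$ and log-concave if $x_{n-1}x_{n+1}\le x_n^2$, for all indices where these terms are defined. A sequence $\{z_n\}$ is log-monotonic of order $k$ if for every odd $r\le k-1$ the sequence $R^r\{z_n\}$ is log-concave and for every even $r\le k-1$ (including $r=0$) the sequence $R^r\{z_n\}$ is log-convex. It is infinitely log-monotonic if it is log-monotonic of order $k$ for every integer $k\ge0$. *)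

theory Defs
  imports Complex_Main
begin

definition ratio_seq :: "(nat \<Rightarrow> real) \<Rightarrow> (nat \<Rightarrow> real)" where
  "ratio_seq z = (\<lambda>n. z (Suc n) / z n)"

definition log_convex_seq :: "(nat \<Rightarrow> real) \<Rightarrow> bool" where
  "log_convex_seq x \<longleftrightarrow> (\<forall>n. x n * x (n + 2) \<ge> (x (n + 1))\<^sup>2)"

definition log_concave_seq :: "(nat \<Rightarrow> real) \<Rightarrow> bool" where
  "log_concave_seq x \<longleftrightarrow> (\<forall>n. x n * x (n + 2) \<le> (x (n + 1))\<^sup>2)"

definition log_monotonic_order :: "nat \<Rightarrow> (nat \<Rightarrow> real) \<Rightarrow> bool" where
  "log_monotonic_order k z \<longleftrightarrow>
     (\<forall>n. z n > 0) \<and>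
     (\<forall>r<k. (odd r \<longrightarrow> log_concave_seq ((ratio_seq ^^ r) z)) \<and>
             (even r \<longrightarrow> log_convex_seq ((ratio_seq ^^ r) z)))"

definition infinitely_log_monotonic :: "(nat \<Rightarrow> real) \<Rightarrow> bool" where
  "infinitely_log_monotonic z \<longleftrightarrow> (\<forall>k. log_monotonic_order k z)"

end

theory Submission
  imports Defs "HOL-Library.Multiset"
begin

text \<open>
  Logarithms turn the ratio operator into the forward difference D, so the claim is
  (-1)^r D^(r+2) ln C_n \<ge> 0 for all r and n. Because
  D ln (N + iX)! = X ln X + \<Sum>j<X. ln (i + (N + 1 + j)/X), this quantity equals
  \<Sum>a\<in>A. F a - \<Sum>b\<in>B. F b for F x = (-1)^r D^(r+1) ln (n + x), where A consists of the
  points (n0 + j)/\<Delta> with 1 \<le> j \<le> \<Delta>, and B of the points (k0 + j)/\<delta> with 1 \<le> j \<le> \<delta>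
  and (n0 - k0 + j)/(\<Delta> - \<delta>) with 1 \<le> j \<le> \<Delta> - \<delta>. Now F is decreasing on (0, \<infinity>),
  its derivative being -(r + 1)! / (y (y + 1) \<cdots> (y + r + 1)) at y = n + x, and the
  hypothesis on k0 says exactly that every half-line (-\<infinity>, t] contains at least as many
  points of A as of B. Matching the points of A and B in sorted order gives the inequality.
\<close>

definition forward_diff :: "('a::{plus,one} \<Rightarrow> 'b::minus) \<Rightarrow> 'a \<Rightarrow> 'b" where
  "forward_diff f x = f (x + 1) - f x"

lemma funpow_forward_diff_Suc:
  "(forward_diff ^^ Suc r) f x = (forward_diff ^^ r) f (x + 1) - (forward_diff ^^ r) f x"
  by (simp add: forward_diff_def)

lemma funpow_forward_diff_diff:
  fixes u v :: "'a::{plus,one} \<Rightarrow> 'b::ab_group_add"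
  shows "(forward_diff ^^ r) (\<lambda>x. u x - v x) x = (forward_diff ^^ r) u x - (forward_diff ^^ r) v x"
  by (induction r arbitrary: x) (simp_all add: forward_diff_def)

lemma funpow_forward_diff_sum:
  fixes g :: "'i \<Rightarrow> 'a::{plus,one} \<Rightarrow> 'b::ab_group_add"
  shows "(forward_diff ^^ r) (\<lambda>x. \<Sum>j\<in>J. g j x) x = (\<Sum>j\<in>J. (forward_diff ^^ r) (g j) x)"
  by (induction r arbitrary: x) (simp_all add: forward_diff_def sum_subtractf)

lemma funpow_forward_diff_of_nat_shift:
  fixes f :: "'a::comm_ring_1 \<Rightarrow> 'b::ab_group_add"
  shows "(forward_diff ^^ r) (\<lambda>i. f (of_nat i + a)) n = (forward_diff ^^ r) f (of_nat n + a)"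
  by (induction r arbitrary: n) (simp_all add: forward_diff_def algebra_simps)

lemma funpow_forward_diff_add_const:
  fixes f :: "'a::{plus,one} \<Rightarrow> 'b::ab_group_add"
  shows "(forward_diff ^^ Suc r) (\<lambda>x. c + f x) x = (forward_diff ^^ Suc r) f x"
proof -
  have "forward_diff (\<lambda>x. c + f x) = forward_diff f"
    by (simp add: fun_eq_iff forward_diff_def)
  then show ?thesis by (simp add: funpow_swap1)
qed

lemma funpow_ratio_seq_Suc:
  "(ratio_seq ^^ Suc r) z n = (ratio_seq ^^ r) z (Suc n) / (ratio_seq ^^ r) z n"
  by (simp add: ratio_seq_def)

lemma funpow_ratio_seq_pos:
  assumes "\<And>n. z n > 0"
  shows "(ratio_seq ^^ r) z n > 0"
  by (induction r arbitrary: n) (simp_all only: funpow_ratio_seq_Suc funpow_0 assms divide_pos_pos)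

lemma ln_funpow_ratio_seq:
  assumes "\<And>n. z n > 0"
  shows "ln ((ratio_seq ^^ r) z n) = (forward_diff ^^ r) (\<lambda>i. ln (z i)) n"
proof (induction r arbitrary: n)
  case 0
  show ?case by simp
next
  case (Suc r)
  have "(ratio_seq ^^ r) z m \<noteq> 0" for m
    by (metis assms funpow_ratio_seq_pos less_irrefl)
  then show ?case
    using Suc.IH by (simp only: funpow_ratio_seq_Suc funpow_forward_diff_Suc) (simp add: ln_div)
qed

lemma second_forward_diff_ln:
  fixes x :: "nat \<Rightarrow> real" and n :: nat
  assumes "\<And>n. x n > 0"
  shows "(forward_diff ^^ 2) (\<lambda>i. ln (x i)) n = ln (x n * x (n + 2)) - ln ((x (n + 1))\<^sup>2)"
  using assms[of n] assms[of "n + 1"] assms[of "n + 2"]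
  by (simp add: forward_diff_def ln_mult power2_eq_square numeral_2_eq_2)

lemma log_convex_seq_iff_forward_diff_ln:
  fixes x :: "nat \<Rightarrow> real"
  assumes "\<And>n. x n > 0"
  shows "log_convex_seq x \<longleftrightarrow> (\<forall>n. 0 \<le> (forward_diff ^^ 2) (\<lambda>i. ln (x i)) n)"
proof -
  have "(x (n + 1))\<^sup>2 \<le> x n * x (n + 2) \<longleftrightarrow> ln ((x (n + 1))\<^sup>2) \<le> ln (x n * x (n + 2))" for n
    by (intro ln_le_cancel_iff[symmetric] mult_pos_pos zero_less_power assms)
  then show ?thesis
    unfolding log_convex_seq_def second_forward_diff_ln[OF assms] by simp
qed

lemma log_concave_seq_iff_forward_diff_ln:
  fixes x :: "nat \<Rightarrow> real"
  assumes "\<And>n. x n > 0"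
  shows "log_concave_seq x \<longleftrightarrow> (\<forall>n. (forward_diff ^^ 2) (\<lambda>i. ln (x i)) n \<le> 0)"
proof -
  have "x n * x (n + 2) \<le> (x (n + 1))\<^sup>2 \<longleftrightarrow> ln (x n * x (n + 2)) \<le> ln ((x (n + 1))\<^sup>2)" for n
    by (intro ln_le_cancel_iff[symmetric] mult_pos_pos zero_less_power assms)
  then show ?thesis
    unfolding log_concave_seq_def second_forward_diff_ln[OF assms] by simp
qed

lemma infinitely_log_monotonic_if_alternating_forward_diff_ln:
  assumes pos: "\<And>n. z n > 0"
    and alternating: "\<And>r n. 0 \<le> (-1) ^ r * (forward_diff ^^ (r + 2)) (\<lambda>i. ln (z i)) n"
  shows "infinitely_log_monotonic z"
  unfolding infinitely_log_monotonic_def log_monotonic_order_def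
proof (intro allI conjI impI)
  fix r :: nat
  have "(forward_diff ^^ 2) (\<lambda>i. ln ((ratio_seq ^^ r) z i)) = (forward_diff ^^ (2 + r)) (\<lambda>i. ln (z i))"
    by (simp only: ln_funpow_ratio_seq[OF pos] funpow_add o_apply)
  then have "0 \<le> (-1) ^ r * (forward_diff ^^ 2) (\<lambda>i. ln ((ratio_seq ^^ r) z i)) n" for n
    using alternating by (simp add: add.commute)
  moreover have "(ratio_seq ^^ r) z n > 0" for n
    using funpow_ratio_seq_pos[OF pos] .
  ultimately show "odd r \<Longrightarrow> log_concave_seq ((ratio_seq ^^ r) z)"
    and "even r \<Longrightarrow> log_convex_seq ((ratio_seq ^^ r) z)"
    by (simp_all add: log_concave_seq_iff_forward_diff_ln log_convex_seq_iff_forward_diff_ln)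
qed (use pos in simp)

lemma funpow_forward_diff_inverse:
  fixes x :: real
  assumes "x > 0"
  shows "(forward_diff ^^ r) inverse x = (-1) ^ r * fact r / pochhammer x (Suc r)"
  using assms
proof (induction r arbitrary: x)
  case 0
  then show ?case by (simp add: inverse_eq_divide)
next
  case (Suc r)
  let ?c = "(-1) ^ r * fact r :: real"
  have pos: "pochhammer x (Suc r) > 0" "pochhammer (x + 1) (Suc r) > 0"
    using Suc.prems by (simp_all add: pochhammer_pos)
  have "1 / pochhammer (x + 1) (Suc r) = x / pochhammer x (Suc (Suc r))"
    using pos Suc.prems by (simp add: pochhammer_rec)
  moreover have "1 / pochhammer x (Suc r) = (x + real (Suc r)) / pochhammer x (Suc (Suc r))"
    using pos Suc.prems by (simp add: pochhammer_Suc[of x "Suc r"])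
  ultimately have "1 / pochhammer (x + 1) (Suc r) - 1 / pochhammer x (Suc r)
      = - real (Suc r) / pochhammer x (Suc (Suc r))"
    by (simp add: diff_divide_distrib[symmetric])
  moreover have "(forward_diff ^^ Suc r) inverse x
      = ?c * (1 / pochhammer (x + 1) (Suc r) - 1 / pochhammer x (Suc r))"
    using Suc.prems
    by (simp only: funpow_forward_diff_Suc Suc.IH) (simp add: right_diff_distrib)
  ultimately show ?case by (simp add: algebra_simps)
qed

lemma has_real_derivative_funpow_forward_diff_ln:
  fixes x :: real
  assumes "x > 0"
  shows "((forward_diff ^^ r) ln has_real_derivative (forward_diff ^^ r) inverse x) (at x)"
  using assms
proof (induction r arbitrary: x)
  case 0
  then show ?case by (auto intro!: derivative_eq_intros simp: inverse_eq_divide)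
next
  case (Suc r)
  have "((\<lambda>y. (forward_diff ^^ r) ln (y + 1)) has_real_derivative (forward_diff ^^ r) inverse (x + 1)) (at x)"
    using Suc.IH[of "x + 1"] Suc.prems DERIV_shift by auto
  from DERIV_diff[OF this Suc.IH[OF Suc.prems]] show ?case
    by (simp add: forward_diff_def [abs_def])
qed

lemma antimono_on_alternating_forward_diff_ln:
  "antimono_on {0<..} (\<lambda>x::real. (-1) ^ r * (forward_diff ^^ Suc r) ln x)"
proof (rule monotone_onI)
  fix a b :: real
  assume "a \<in> {0<..}" "b \<in> {0<..}" "a \<le> b"
  show "(-1) ^ r * (forward_diff ^^ Suc r) ln b \<le> (-1) ^ r * (forward_diff ^^ Suc r) ln a"
  proof (rule deriv_nonpos_imp_antimono
      [where g = "\<lambda>x. (-1) ^ r * (forward_diff ^^ Suc r) ln x"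
         and g' = "\<lambda>x. (-1) ^ r * (forward_diff ^^ Suc r) inverse x"])
    fix x assume "x \<in> {a..b}"
    with \<open>a \<in> {0<..}\<close> have "x > 0" by simp
    show "((\<lambda>x. (-1) ^ r * (forward_diff ^^ Suc r) ln x) has_real_derivative
          (-1) ^ r * (forward_diff ^^ Suc r) inverse x) (at x)"
      using has_real_derivative_funpow_forward_diff_ln[OF \<open>x > 0\<close>] by (rule DERIV_cmult)
    show "(-1) ^ r * (forward_diff ^^ Suc r) inverse x \<le> 0"
      using \<open>x > 0\<close> by (simp only: funpow_forward_diff_inverse) (simp add: pochhammer_pos less_imp_le)
  qed fact
qed

lemma le_Max_mset_if_count_le:
  fixes A B :: "'a::linorder multiset"
  assumes "B \<noteq> {#}" "size A = size B"
    and "\<And>t. size (filter_mset (\<lambda>x. x \<le> t) B) \<le> size (filter_mset (\<lambda>x. x \<le> t) A)"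
    and "x \<in># A"
  shows "x \<le> Max_mset B"
proof -
  have "filter_mset (\<lambda>x. x \<le> Max_mset B) B = B"
    using assms(1) by (simp add: filter_mset_eq_conv)
  then have "size A \<le> size (filter_mset (\<lambda>x. x \<le> Max_mset B) A)"
    using assms(2) assms(3)[of "Max_mset B"] by simp
  then have "filter_mset (\<lambda>x. x \<le> Max_mset B) A = A"
    by (metis multiset_filter_subset mset_subset_size not_less subset_mset.le_imp_less_or_eq)
  with assms(4) show ?thesis by (metis filter_mset_eq_conv)
qed

lemma sum_mset_antimono_on_dominated:
  fixes A B :: "'a::linorder multiset" and F :: "'a \<Rightarrow> 'b::ordered_comm_monoid_add"
  assumes "size A = size B"
    and "\<And>t. size (filter_mset (\<lambda>x. x \<le> t) B) \<le> size (filter_mset (\<lambda>x. x \<le> t) A)"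
    and "set_mset (A + B) \<subseteq> S" and "antimono_on S F"
  shows "(\<Sum>x\<in>#B. F x) \<le> (\<Sum>x\<in>#A. F x)"
  using assms(1-3)
proof (induction "size A" arbitrary: A B)
  case 0
  then show ?case by simp
next
  case (Suc m)
  then have "A \<noteq> {#}" "B \<noteq> {#}" by auto
  define a where "a = Max_mset A"
  define b where "b = Max_mset B"
  have "a \<in># A" "b \<in># B"
    using \<open>A \<noteq> {#}\<close> \<open>B \<noteq> {#}\<close> by (simp_all add: a_def b_def)
  then obtain A' B' where A: "A = add_mset a A'" and B: "B = add_mset b B'"
    by (metis insert_DiffM)
  have below_a: "x \<le> a" if "x \<in># A" for x
    using that by (simp add: a_def)
  have "a \<le> b"
    unfolding b_def using \<open>B \<noteq> {#}\<close> Suc.prems(1,2) \<open>a \<in># A\<close> by (rule le_Max_mset_if_count_le)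
  then have "F b \<le> F a"
    using assms(4) Suc.prems(3) \<open>a \<in># A\<close> \<open>b \<in># B\<close> by (auto simp: monotone_on_def)
  moreover have "(\<Sum>x\<in>#B'. F x) \<le> (\<Sum>x\<in>#A'. F x)"
  proof (rule Suc.hyps(1))
    show "m = size A'" "size A' = size B'"
      using Suc.hyps(2) Suc.prems(1) A B by simp_all
    show "set_mset (A' + B') \<subseteq> S" using Suc.prems(3) A B by auto
    fix t
    show "size (filter_mset (\<lambda>x. x \<le> t) B') \<le> size (filter_mset (\<lambda>x. x \<le> t) A')"
    proof (cases "t < a")
      case True
      then show ?thesis using Suc.prems(2)[of t] A B by (auto split: if_splits)
    next
      case False
      then have "filter_mset (\<lambda>x. x \<le> t) A' = A'"
        using below_a A by (force simp: filter_mset_eq_conv)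
      then show ?thesis
        using Suc.prems(1) A B by (metis size_add_mset nat.inject size_filter_mset_lesseq)
    qed
  qed
  ultimately show ?case using A B by (simp add: add_mono)
qed

definition frac_points :: "nat \<Rightarrow> nat \<Rightarrow> real multiset" where
  "frac_points N X = image_mset (\<lambda>j. (real N + 1 + real j) / real X) (mset_set {..<X})"

lemma size_filter_le_frac_points:
  assumes "X > 0"
  shows "size (filter_mset (\<lambda>x. x \<le> t) (frac_points N X)) = nat (min (int X) (\<lfloor>t * X\<rfloor> - int N))"
proof -
  have "(real N + 1 + real j) / real X \<le> t \<longleftrightarrow> int N + 1 + int j \<le> \<lfloor>t * X\<rfloor>" for j
    using assms by (simp add: divide_le_eq le_floor_iff mult.commute)
  moreover have "j < X \<and> int N + 1 + int j \<le> \<lfloor>t * X\<rfloor> \<longleftrightarrow>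
      j < nat (min (int X) (\<lfloor>t * X\<rfloor> - int N))" for j
    by linarith
  ultimately have "{j \<in> {..<X}. (real N + 1 + real j) / real X \<le> t} = {..< nat (min (int X) (\<lfloor>t * X\<rfloor> - int N))}"
    by blast
  then show ?thesis
    by (simp add: frac_points_def filter_mset_image_mset filter_mset_mset_set)
qed

lemma le_floor_mult_transfer:
  fixes t :: real and d e k m :: nat
  assumes "e > 0" "k * e \<le> m * d" "int m \<le> \<lfloor>t * e\<rfloor>"
  shows "int k \<le> \<lfloor>t * d\<rfloor>"
proof -
  have "real k * e \<le> real m * d"
    using of_nat_mono[OF assms(2), where 'a = real] by simp
  also have "\<dots> \<le> (t * e) * d"
    using assms(3) by (intro mult_right_mono) linarith+
  finally have "real k * e \<le> (t * d) * e" by (simp add: ac_simps)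
  then have "real k \<le> t * d" using assms(1) by simp
  then show ?thesis by (simp add: le_floor_iff)
qed

lemma frac_points_dominated:
  fixes k c d e :: nat
  assumes "d > 0" "e > 0" "k * e \<le> (c + 1) * d" "c * d \<le> (k + 1) * e"
  shows "size (filter_mset (\<lambda>x. x \<le> t) (frac_points k d + frac_points c e))
       \<le> size (filter_mset (\<lambda>x. x \<le> t) (frac_points (k + c) (d + e)))"
proof -
  define p where "p = \<lfloor>t * d\<rfloor>"
  define q where "q = \<lfloor>t * e\<rfloor>"
  define s where "s = \<lfloor>t * (d + e)\<rfloor>"
  have "p + q \<le> s"
    using le_floor_add[of "t * d" "t * e"] by (simp add: p_def q_def s_def distrib_left)
  moreover have "int c + 1 \<le> q \<Longrightarrow> int k \<le> p"
    using le_floor_mult_transfer[OF assms(2,3)] by (simp add: p_def q_def)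
  moreover have "int k + 1 \<le> p \<Longrightarrow> int c \<le> q"
    using le_floor_mult_transfer[OF assms(1), of c "k + 1"] assms(4)
    by (simp add: p_def q_def mult.commute)
  ultimately have "nat (min (int d) (p - int k)) + nat (min (int e) (q - int c))
      \<le> nat (min (int (d + e)) (s - int (k + c)))"
    by linarith
  then show ?thesis
    using assms(1,2) by (simp only: filter_union_mset size_union size_filter_le_frac_points
      p_def q_def s_def add_pos_pos)
qed

lemma fact_add_pochhammer:
  "fact (m + n) = (fact m :: 'a::{semiring_char_0,comm_semiring_1}) * pochhammer (of_nat m + 1) n"
  by (simp add: pochhammer_fact pochhammer_product' add.commute)

lemma forward_diff_ln_fact_progression:
  fixes N X :: nat
  assumes "X > 0"
  shows "forward_diff (\<lambda>i. ln (fact (N + i * X))) i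
       = X * ln X + (\<Sum>j<X. ln (real i + (real N + 1 + real j) / X))"
proof -
  define a where "a = real (N + i * X) + 1"
  have pos: "a + real j > 0" for j
    using of_nat_0_le_iff[of "N + i * X"] of_nat_0_le_iff[of j] unfolding a_def by linarith
  have "N + Suc i * X = (N + i * X) + X" by simp
  then have "fact (N + Suc i * X) = (fact (N + i * X) :: real) * pochhammer a X"
    unfolding a_def by (simp only: fact_add_pochhammer)
  then have "forward_diff (\<lambda>i. ln (fact (N + i * X))) i = ln (pochhammer a X)"
    using pochhammer_pos[of a X] pos[of 0] by (simp add: forward_diff_def ln_mult)
  also have "\<dots> = (\<Sum>j<X. ln (a + real j))"
    unfolding pochhammer_prod lessThan_atLeast0 using pos by (simp add: ln_prod order_less_imp_not_eq2)
  also have "\<dots> = (\<Sum>j<X. ln X + ln (real i + (real N + 1 + real j) / X))"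
  proof (intro sum.cong refl)
    fix j
    have "a + real j = X * (real i + (real N + 1 + real j) / X)"
      using assms unfolding a_def by (simp add: field_simps)
    then show "ln (a + real j) = ln X + ln (real i + (real N + 1 + real j) / X)"
      using assms pos[of j] by (simp add: ln_mult zero_less_mult_iff)
  qed
  finally show ?thesis by (simp add: sum.distrib)
qed

lemma funpow_forward_diff_ln_fact_progression:
  fixes N X :: nat
  assumes "X > 0"
  shows "(forward_diff ^^ Suc (Suc r)) (\<lambda>i. ln (fact (N + i * X))) n
       = (\<Sum>x\<in>#frac_points N X. (forward_diff ^^ Suc r) ln (real n + x))"
proof -
  have "forward_diff (\<lambda>i. ln (fact (N + i * X)))
      = (\<lambda>i. X * ln X + (\<Sum>j<X. ln (real i + (real N + 1 + real j) / X)))"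
    using forward_diff_ln_fact_progression[OF assms] by (rule ext)
  then have "(forward_diff ^^ Suc (Suc r)) (\<lambda>i. ln (fact (N + i * X))) n
      = (forward_diff ^^ Suc r) (\<lambda>i. X * ln X + (\<Sum>j<X. ln (real i + (real N + 1 + real j) / X))) n"
    by (simp only: funpow_Suc_right o_apply)
  also have "\<dots> = (\<Sum>j<X. (forward_diff ^^ Suc r) ln (real n + (real N + 1 + real j) / X))"
    by (simp only: funpow_forward_diff_add_const funpow_forward_diff_sum funpow_forward_diff_of_nat_shift)
  finally show ?thesis
    by (simp add: frac_points_def sum_unfold_sum_mset multiset.map_comp o_def)
qed

lemma ln_binomial_progression:
  fixes k c d e i :: nat
  shows "ln (real ((k + c + i * (d + e)) choose (k + i * d)))
       = ln (fact (k + c + i * (d + e))) - ln (fact (k + i * d)) - ln (fact (c + i * e))"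
proof -
  have "k + c + i * (d + e) = (k + i * d) + (c + i * e)" by (simp add: algebra_simps)
  then have "real ((k + c + i * (d + e)) choose (k + i * d))
      = fact (k + c + i * (d + e)) / (fact (k + i * d) * fact (c + i * e))"
    by (simp add: binomial_fact)
  then show ?thesis by (simp add: ln_div ln_mult)
qed

lemma alternating_forward_diff_ln_binomial_progression_nonneg:
  fixes k c d e :: nat
  assumes "d > 0" "e > 0" "k * e \<le> (c + 1) * d" "c * d \<le> (k + 1) * e"
  shows "0 \<le> (-1) ^ r * (forward_diff ^^ (r + 2))
                (\<lambda>i. ln (real ((k + c + i * (d + e)) choose (k + i * d)))) n"
proof -
  define G where "G x = (forward_diff ^^ Suc r) ln (real n + x)" for x
  define F where "F x = (-1) ^ r * G x" for x
  define A where "A = frac_points (k + c) (d + e)"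
  define B where "B = frac_points k d + frac_points c e"
  have ln_binomial: "(\<lambda>i. ln (real ((k + c + i * (d + e)) choose (k + i * d))))
      = (\<lambda>i. ln (fact (k + c + i * (d + e))) - ln (fact (k + i * d)) - ln (fact (c + i * e)))"
    by (simp only: ln_binomial_progression)
  have "(forward_diff ^^ Suc (Suc r)) (\<lambda>i. ln (real ((k + c + i * (d + e)) choose (k + i * d)))) n
      = (\<Sum>x\<in>#A. G x) - (\<Sum>x\<in>#frac_points k d. G x) - (\<Sum>x\<in>#frac_points c e. G x)"
    unfolding ln_binomial funpow_forward_diff_diff A_def G_def
      funpow_forward_diff_ln_fact_progression[OF add_pos_pos[OF assms(1,2)]]
      funpow_forward_diff_ln_fact_progression[OF assms(1)]
      funpow_forward_diff_ln_fact_progression[OF assms(2)] ..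
  then have "(-1) ^ r * (forward_diff ^^ (r + 2))
                (\<lambda>i. ln (real ((k + c + i * (d + e)) choose (k + i * d)))) n
      = (\<Sum>x\<in>#A. F x) - (\<Sum>x\<in>#B. F x)"
    by (simp add: F_def G_def B_def sum_mset_distrib_left right_diff_distrib)
  moreover have "(\<Sum>x\<in>#B. F x) \<le> (\<Sum>x\<in>#A. F x)"
  proof (rule sum_mset_antimono_on_dominated)
    show "size A = size B" by (simp add: A_def B_def frac_points_def)
    show "size (filter_mset (\<lambda>x. x \<le> t) B) \<le> size (filter_mset (\<lambda>x. x \<le> t) A)" for t
      unfolding A_def B_def using assms by (rule frac_points_dominated)
    show "set_mset (A + B) \<subseteq> {0<..}"
      using assms(1,2) by (auto simp: A_def B_def frac_points_def)
    show "antimono_on {0<..} F"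
      using antimono_on_alternating_forward_diff_ln[of r]
      by (auto simp: F_def G_def monotone_on_def add_pos_nonneg)
  qed
  ultimately show ?thesis by simp
qed

lemma infinitely_log_monotonic_binomial_progression:
  fixes k c d e :: nat
  assumes "d > 0" "e > 0" "k * e \<le> (c + 1) * d" "c * d \<le> (k + 1) * e"
  shows "infinitely_log_monotonic (\<lambda>i. real ((k + c + i * (d + e)) choose (k + i * d)))"
proof (rule infinitely_log_monotonic_if_alternating_forward_diff_ln)
  show "0 < real ((k + c + i * (d + e)) choose (k + i * d))" for i
    by (simp add: algebra_simps)
qed (rule alternating_forward_diff_ln_binomial_progression_nonneg[OF assms])

theorem corollary3p3:
  fixes n0 k0 \<Delta> \<delta> :: nat
  assumes "\<Delta> > \<delta>" and "\<delta> > 0"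
    and "-1 \<le> real k0 - (real n0 + 1) * real \<delta> / real \<Delta>"
    and "real k0 - (real n0 + 1) * real \<delta> / real \<Delta> \<le> 0"
  shows "infinitely_log_monotonic (\<lambda>i. real ((n0 + i * \<Delta>) choose (k0 + i * \<delta>)))"
proof -
  define e where "e = \<Delta> - \<delta>"
  have \<Delta>: "\<Delta> = \<delta> + e" and "e > 0" using assms(1) by (simp_all add: e_def)
  have "real k0 * \<Delta> \<le> (real n0 + 1) * \<delta>" "(real n0 + 1) * \<delta> \<le> (real k0 + 1) * \<Delta>"
    using assms(1,3,4) by (simp_all add: field_simps)
  then have upper: "k0 * \<Delta> \<le> (n0 + 1) * \<delta>" and lower: "(n0 + 1) * \<delta> \<le> (k0 + 1) * \<Delta>"
    by (metis of_nat_1 of_nat_add of_nat_le_iff of_nat_mult)+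
  have "(n0 + 1) * \<delta> < (n0 + 1) * \<Delta>" using assms(1) by (intro mult_strict_left_mono) simp_all
  with upper have "k0 * \<Delta> < (n0 + 1) * \<Delta>" by linarith
  then have "k0 \<le> n0" by (simp only: mult_less_cancel2) simp
  then obtain c where n0: "n0 = k0 + c" using le_Suc_ex by blast
  have "k0 * e \<le> (c + 1) * \<delta>" "c * \<delta> \<le> (k0 + 1) * e"
    using upper lower unfolding \<Delta> n0 by (simp_all add: algebra_simps)
  from infinitely_log_monotonic_binomial_progression[OF assms(2) \<open>e > 0\<close> this]
  show ?thesis unfolding \<Delta> n0 .
qed

end
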